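(* Let $E$ be a vector bundle of rank $r$ on a variety $X$ and $k\geq 0$. Then for all $d$, $$s_k(\mathrm{Sym}^d(E))=\sum_{|\lambda|=k}p_\lambda(d)\,c_\lambda(E),$$ where the sum runs over the partitions $\lambda=(\lambda_1,\dots,\lambda_l)$ of $k$, $c_\lambda(E):=c_{\lambda_1}(E)\cdots c_{\lambda_l}(E)$, and each $p_\lambda(d)$ is a polynomial in $d$ (with rational coefficients, independent of $E$ and $X$) of degree $\leq rk$; moreover there exists $\lambda$ with $p_\lambda$ of degree exactly $rk$.
   Context: $s_k$ denotes the $k$-th Segre class, with the convention that the total Segre class is the inverse of the total Chern class: $s(E)=c(E)^{-1}$. *)

theory Defs
  imports "HOL-Computational_Algebra.Computational_Algebra" "HOL-Library.Multiset"
begin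

text \<open>Splitting principle model: a rank r bundle E is represented by its Chern roots
  x 0, ..., x (r-1) (values outside {..<r} are ignored).\<close>

definition chern :: "nat \<Rightarrow> (nat \<Rightarrow> real) \<Rightarrow> nat \<Rightarrow> real" where
  "chern r x i = (\<Sum>S\<in>{S. S \<subseteq> {..<r} \<and> card S = i}. \<Prod>j\<in>S. x j)"

definition chern_part :: "nat \<Rightarrow> (nat \<Rightarrow> real) \<Rightarrow> nat multiset \<Rightarrow> real" where
  "chern_part r x lam = (\<Prod>i\<in>#lam. chern r x i)"

definition partitions_of :: "nat \<Rightarrow> nat multiset set" where
  "partitions_of k = {lam. (\<forall>i\<in>#lam. 0 < i) \<and> sum_mset lam = k}"

text \<open>Exponent vectors a of the monomials of degree d in r variables; the Chern roots
  of Sym^d E are the sums a_0 x_0 + ... + a_(r-1) x_(r-1).\<close>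
definition sym_exps :: "nat \<Rightarrow> nat \<Rightarrow> (nat \<Rightarrow> nat) set" where
  "sym_exps r d = {a. (\<forall>j. r \<le> j \<longrightarrow> a j = 0) \<and> (\<Sum>j<r. a j) = d}"

definition sym_root :: "nat \<Rightarrow> (nat \<Rightarrow> real) \<Rightarrow> (nat \<Rightarrow> nat) \<Rightarrow> real" where
  "sym_root r x a = (\<Sum>j<r. real (a j) * x j)"

text \<open>k-th Segre class of Sym^d E: degree-k part of c(Sym^d E)^{-1}, where the
  grading is tracked by the formal variable X.\<close>
definition segre_sym :: "nat \<Rightarrow> (nat \<Rightarrow> real) \<Rightarrow> nat \<Rightarrow> nat \<Rightarrow> real" where
  "segre_sym r x d k =
     fps_nth (inverse (\<Prod>a\<in>sym_exps r d. 1 + fps_const (sym_root r x a) * fps_X)) k"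

end

theory Submission
  imports Defs
begin

(* By the splitting principle the Chern roots of Sym^d E are the sums
   <a, x> = a_0 x_0 + ... + a_(r-1) x_(r-1) over the exponent vectors a of degree d.
   Newton's identities express s_k(Sym^d E) through the power sums P_m(d) of these roots,
   and P_m(d) is a rational combination of the c_lambda(E) with |lambda| = m by induction
   on d, using d P_m(d) = sum over 1 <= n <= d, i < r, |b| = d - n of (<b, x> + n x_i)^m.
   For fixed roots, splitting off the last coordinate writes P_m(d) as a convolution, so
   P_m(d) is a polynomial in d of degree <= m + r - 1 and s_k(Sym^d E) one of degree <= rk;
   Lagrange interpolation at d = 0, ..., rk turns the two facts into rational polynomial
   coefficients p_lambda. For the exact degree put all roots equal to 1: then Sym^d E has
   N >= d^(r-1)/(r-1)! roots, all equal to d, and |s_k| >= (N d)^k / k!, which grows like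
   d^(rk). Only the c_lambda with all parts <= r are nonzero there, so one of their
   coefficients has degree rk. *)

lemma sym_exps_le: "a \<in> sym_exps r d \<Longrightarrow> a i \<le> d"
  unfolding sym_exps_def
  by (cases "i < r") (auto intro!: member_le_sum[of i "{..<r}" a, simplified])

lemma finite_sym_exps: "finite (sym_exps r d)"
proof (rule finite_subset)
  show "sym_exps r d \<subseteq> {a. \<forall>j. (j \<in> {..<r} \<longrightarrow> a j \<in> {..d}) \<and> (j \<notin> {..<r} \<longrightarrow> a j = 0)}"
    using sym_exps_le by (auto simp: sym_exps_def)
qed (intro finite_set_of_finite_funs; simp)

lemma sym_exps_degree_0: "sym_exps r 0 = {\<lambda>_. 0}"
proof -
  have "a = (\<lambda>_. 0)" if "a \<in> sym_exps r 0" for a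
    using sym_exps_le[OF that] by auto
  then show ?thesis by (auto simp: sym_exps_def)
qed

lemma sym_exps_rank_0: "sym_exps 0 e = (if e = 0 then {\<lambda>_. 0} else {})"
  by (auto simp: sym_exps_def)

lemma size_le_sum_mset: "\<forall>i\<in>#M. 0 < (i::nat) \<Longrightarrow> size M \<le> sum_mset M"
  by (induction M) auto

lemma finite_partitions_of: "finite (partitions_of k)"
proof (rule finite_subset)
  show "partitions_of k \<subseteq> (\<Union>n\<le>k. multisets_of_size {..k} n)"
  proof
    fix lam assume "lam \<in> partitions_of k"
    then have "size lam \<le> k" "set_mset lam \<subseteq> {..k}"
      using size_le_sum_mset by (auto simp: partitions_of_def dest!: sum_mset.remove)
    then show "lam \<in> (\<Union>n\<le>k. multisets_of_size {..k} n)"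
      by (auto simp: multisets_of_size_def)
  qed
qed auto

lemma partitions_of_0: "partitions_of 0 = {{#}}"
  unfolding partitions_of_def by (auto, metis gr_implies_not0 multiset_nonemptyE)

lemma chern_eq_0_above_rank: "r < i \<Longrightarrow> chern r x i = 0"
  unfolding chern_def by (auto dest!: card_mono[OF finite_lessThan] intro: sum.neutral)

lemma chern_part_eq_0_above_rank: "i \<in># lam \<Longrightarrow> r < i \<Longrightarrow> chern_part r x lam = 0"
  unfolding chern_part_def using chern_eq_0_above_rank[of r i x] by (force simp: prod_mset_zero_iff)

section \<open>Rational combinations of Chern monomials\<close>

definition chern_combination :: "nat \<Rightarrow> nat \<Rightarrow> ((nat \<Rightarrow> real) \<Rightarrow> real) \<Rightarrow> bool" where
  "chern_combination r k f \<longleftrightarrow> (\<exists>\<alpha>::nat multiset \<Rightarrow> rat. \<forall>x.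
      f x = (\<Sum>lam\<in>partitions_of k. of_rat (\<alpha> lam) * chern_part r x lam))"

lemma chern_combination_zero: "chern_combination r k (\<lambda>_. 0)"
  unfolding chern_combination_def by (rule exI[of _ "\<lambda>_. 0"]) simp

lemma chern_combination_add:
  assumes "chern_combination r k f" "chern_combination r k g"
  shows "chern_combination r k (\<lambda>x. f x + g x)"
proof -
  obtain \<alpha> \<beta> where
    "\<And>x. f x = (\<Sum>lam\<in>partitions_of k. of_rat (\<alpha> lam) * chern_part r x lam)"
    "\<And>x. g x = (\<Sum>lam\<in>partitions_of k. of_rat (\<beta> lam) * chern_part r x lam)"
    using assms unfolding chern_combination_def by blast
  then show ?thesis unfolding chern_combination_def
    by (intro exI[of _ "\<lambda>lam. \<alpha> lam + \<beta> lam"]) (simp add: of_rat_add distrib_right sum.distrib)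
qed

lemma chern_combination_scale:
  assumes "chern_combination r k f" "c \<in> \<rat>"
  shows "chern_combination r k (\<lambda>x. c * f x)"
proof -
  obtain \<alpha> where "\<And>x. f x = (\<Sum>lam\<in>partitions_of k. of_rat (\<alpha> lam) * chern_part r x lam)"
    using assms(1) unfolding chern_combination_def by blast
  moreover obtain q where "c = of_rat q" using assms(2) by (cases rule: Rats_cases)
  ultimately show ?thesis unfolding chern_combination_def
    by (intro exI[of _ "\<lambda>lam. q * \<alpha> lam"]) (simp add: of_rat_mult sum_distrib_left mult.assoc)
qed

lemma chern_combination_sum:
  "finite I \<Longrightarrow> (\<And>i. i \<in> I \<Longrightarrow> chern_combination r k (f i))
    \<Longrightarrow> chern_combination r k (\<lambda>x. \<Sum>i\<in>I. f i x)"
  by (induction I rule: finite_induct) (simp_all add: chern_combination_zero chern_combination_add)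

lemma chern_combination_const: "c \<in> \<rat> \<Longrightarrow> chern_combination r 0 (\<lambda>_. c)"
  unfolding chern_combination_def
  by (cases rule: Rats_cases) (auto intro!: exI[of _ "\<lambda>_. _"] simp: partitions_of_0 chern_part_def)

lemma chern_combination_chern:
  assumes "0 < j"
  shows "chern_combination r j (\<lambda>x. chern r x j)"
  unfolding chern_combination_def
proof (intro exI[of _ "\<lambda>lam. if lam = {#j#} then 1 else 0"] allI)
  fix x
  have "{#j#} \<in> partitions_of j" using assms by (simp add: partitions_of_def)
  moreover have "(\<Sum>lam\<in>partitions_of j. of_rat (if lam = {#j#} then 1 else 0) * chern_part r x lam)
      = (\<Sum>lam\<in>partitions_of j. if lam = {#j#} then chern_part r x lam else 0)"
    by (intro sum.cong) auto
  ultimately show "chern r x j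
      = (\<Sum>lam\<in>partitions_of j. of_rat (if lam = {#j#} then 1 else 0) * chern_part r x lam)"
    by (simp add: finite_partitions_of chern_part_def)
qed

lemma chern_combination_mult:
  assumes "chern_combination r k1 f" "chern_combination r k2 g" "k1 + k2 = k"
  shows "chern_combination r k (\<lambda>x. f x * g x)"
proof -
  obtain \<alpha> \<beta> where
    f: "\<And>x. f x = (\<Sum>lam\<in>partitions_of k1. of_rat (\<alpha> lam) * chern_part r x lam)" and
    g: "\<And>x. g x = (\<Sum>lam\<in>partitions_of k2. of_rat (\<beta> lam) * chern_part r x lam)"
    using assms unfolding chern_combination_def by blast
  let ?A = "partitions_of k1 \<times> partitions_of k2"
  let ?c = "\<lambda>lam. \<Sum>p\<in>{p\<in>?A. fst p + snd p = lam}. \<alpha> (fst p) * \<beta> (snd p)"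
  have union: "(\<lambda>p. fst p + snd p) ` ?A \<subseteq> partitions_of k"
    using assms(3) by (auto simp: partitions_of_def)
  have "f x * g x = (\<Sum>lam\<in>partitions_of k. of_rat (?c lam) * chern_part r x lam)" for x
  proof -
    have "f x * g x = (\<Sum>p\<in>?A. of_rat (\<alpha> (fst p) * \<beta> (snd p)) * chern_part r x (fst p + snd p))"
      by (simp add: f g sum_product sum.cartesian_product chern_part_def of_rat_mult mult_ac
          case_prod_beta)
    also have "\<dots> = (\<Sum>lam\<in>partitions_of k. \<Sum>p\<in>{p\<in>?A. fst p + snd p = lam}.
                      of_rat (\<alpha> (fst p) * \<beta> (snd p)) * chern_part r x (fst p + snd p))"
      by (rule sum.group[symmetric]) (use union in \<open>auto simp: finite_partitions_of\<close>)
    also have "\<dots> = (\<Sum>lam\<in>partitions_of k. of_rat (?c lam) * chern_part r x lam)"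
      unfolding of_rat_sum sum_distrib_right by (intro sum.cong refl) auto
    finally show ?thesis .
  qed
  then show ?thesis
    unfolding chern_combination_def by (intro exI[of _ ?c]) blast
qed

section \<open>Power sums and Newton's identities\<close>

(* The total Chern class of a bundle whose Chern roots are the values of rho on A. *)
definition root_fps :: "('b \<Rightarrow> 'a::comm_ring_1) \<Rightarrow> 'b set \<Rightarrow> 'a fps" where
  "root_fps \<rho> A = (\<Prod>a\<in>A. 1 + fps_const (\<rho> a) * fps_X)"

definition power_sum :: "('b \<Rightarrow> 'a::comm_semiring_1) \<Rightarrow> 'b set \<Rightarrow> nat \<Rightarrow> 'a" where
  "power_sum \<rho> A m = (\<Sum>a\<in>A. \<rho> a ^ m)"

lemma root_fps_nth_0 [simp]: "root_fps \<rho> A $ 0 = 1"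
  unfolding root_fps_def by (induction A rule: infinite_finite_induct) (auto simp: fps_mult_nth)

lemma prod_fps_const: "(\<Prod>i\<in>B. fps_const (f i)) = fps_const (\<Prod>i\<in>B. f i :: 'a::comm_ring_1)"
  by (induction B rule: infinite_finite_induct) (simp_all add: fps_const_mult)

lemma root_fps_nth_chern: "root_fps x {..<r} $ j = chern r x j"
proof -
  have "root_fps x {..<r} = (\<Sum>B\<in>Pow {..<r}. fps_const (\<Prod>i\<in>B. x i) * fps_X ^ card B)"
    unfolding root_fps_def add.commute[of 1]
    by (simp add: prod_add prod.distrib prod_fps_const)
  then have "root_fps x {..<r} $ j = (\<Sum>B\<in>Pow {..<r}. if card B = j then \<Prod>i\<in>B. x i else 0)"
    by (auto simp: fps_sum_nth intro!: sum.cong)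
  also have "\<dots> = chern r x j"
    unfolding chern_def by (subst sum.inter_filter[symmetric]) (auto intro!: sum.cong)
  finally show ?thesis .
qed

lemma segre_sym_eq: "segre_sym r x d k = inverse (root_fps (sym_root r x) (sym_exps r d)) $ k"
  by (simp add: segre_sym_def root_fps_def)

lemma fps_deriv_root_fps:
  fixes \<rho> :: "'b \<Rightarrow> 'a::comm_ring_1"
  assumes "finite A"
  shows "fps_deriv (root_fps \<rho> A)
       = root_fps \<rho> A * Abs_fps (\<lambda>n. (-1) ^ n * power_sum \<rho> A (Suc n))"
  using assms
proof (induction A rule: finite_induct)
  case empty
  show ?case by (simp add: root_fps_def power_sum_def fps_zero_def)
next
  case (insert a A)
  let ?f = "1 + fps_const (\<rho> a) * fps_X" and ?P = "root_fps \<rho> A"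
  \<comment> \<open>The logarithmic derivative of \<open>1 + c X\<close> is \<open>c / (1 + c X)\<close>.\<close>
  have log_deriv: "fps_deriv ?f = ?f * Abs_fps (\<lambda>n. (-1) ^ n * \<rho> a ^ Suc n)"
  proof (rule fps_ext)
    fix n show "fps_deriv ?f $ n = (?f * Abs_fps (\<lambda>n. (-1) ^ n * \<rho> a ^ Suc n)) $ n"
      by (cases n) (simp_all add: distrib_right fps_mult_nth_1 mult.assoc)
  qed
  have "Abs_fps (\<lambda>n. (-1) ^ n * power_sum \<rho> (insert a A) (Suc n))
      = Abs_fps (\<lambda>n. (-1) ^ n * \<rho> a ^ Suc n) + Abs_fps (\<lambda>n. (-1) ^ n * power_sum \<rho> A (Suc n))"
    using insert by (intro fps_ext) (simp add: power_sum_def distrib_left)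
  moreover have "root_fps \<rho> (insert a A) = ?f * ?P" using insert by (simp add: root_fps_def)
  moreover have "fps_deriv (?f * ?P)
      = (?f * ?P) * (Abs_fps (\<lambda>n. (-1) ^ n * \<rho> a ^ Suc n) + Abs_fps (\<lambda>n. (-1) ^ n * power_sum \<rho> A (Suc n)))"
    unfolding fps_deriv_mult log_deriv insert.IH by (simp add: algebra_simps)
  ultimately show ?case by simp
qed

lemma newton_identity:
  fixes \<rho> :: "'b \<Rightarrow> 'a::comm_ring_1"
  assumes "finite A"
  shows "of_nat (Suc k) * root_fps \<rho> A $ Suc k
       = (\<Sum>i=0..k. root_fps \<rho> A $ i * ((-1) ^ (k - i) * power_sum \<rho> A (Suc (k - i))))"
  using arg_cong[OF fps_deriv_root_fps[OF assms], of "\<lambda>F. F $ k"]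
  by (simp add: fps_mult_nth)

lemma newton_identity_inverse:
  fixes \<rho> :: "'b \<Rightarrow> 'a::field"
  assumes "finite A"
  defines "S \<equiv> inverse (root_fps \<rho> A)"
  shows "of_nat (Suc k) * S $ Suc k
       = - (\<Sum>i=0..k. S $ i * ((-1) ^ (k - i) * power_sum \<rho> A (Suc (k - i))))"
proof -
  let ?L = "Abs_fps (\<lambda>n. (-1) ^ n * power_sum \<rho> A (Suc n))"
  have "fps_deriv S = - fps_deriv (root_fps \<rho> A) * S\<^sup>2"
    unfolding S_def by (simp add: fps_inverse_deriv)
  also have "\<dots> = - ?L * (root_fps \<rho> A * S) * S"
    by (simp add: fps_deriv_root_fps[OF assms(1)] power2_eq_square mult_ac)
  also have "root_fps \<rho> A * S = 1"
    unfolding S_def by (simp add: inverse_mult_eq_1')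
  finally have "fps_deriv S = - (S * ?L)" by (simp add: mult.commute)
  from arg_cong[OF this, of "\<lambda>F. F $ k"] show ?thesis
    by (simp add: fps_mult_nth sum_negf)
qed

lemma chern_0: "chern r x 0 = 1"
  using root_fps_nth_chern[of x r 0] by simp

lemma chern_combination_power_sum: "chern_combination r j (\<lambda>x. power_sum x {..<r} j)"
proof (induction j rule: less_induct)
  case (less j)
  show ?case
  proof (cases j)
    case 0
    then show ?thesis by (simp add: power_sum_def chern_combination_const)
  next
    case (Suc k)
    let ?p = "\<lambda>x j. power_sum x {..<r} j"
    let ?R = "\<lambda>x. \<Sum>i=1..k. chern r x i * ((-1) ^ (k - i) * ?p x (Suc (k - i)))"
    have newton: "?p x (Suc k) = (-1) ^ k * (of_nat (Suc k) * chern r x (Suc k) + (-1) * ?R x)" for x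
    proof -
      have "of_nat (Suc k) * chern r x (Suc k) = (-1) ^ k * ?p x (Suc k) + ?R x"
        using newton_identity[of "{..<r}" k x]
        by (simp add: root_fps_nth_chern sum.atLeast_Suc_atMost chern_0)
      then have "(-1) ^ k * (of_nat (Suc k) * chern r x (Suc k) + (-1) * ?R x) = ((-1) ^ k) ^ 2 * ?p x (Suc k)"
        by (simp add: algebra_simps power2_eq_square)
      then show ?thesis by (simp flip: power_mult)
    qed
    show ?thesis
      unfolding Suc newton
      by (intro chern_combination_scale chern_combination_add chern_combination_sum
            chern_combination_mult[OF chern_combination_chern chern_combination_scale[OF less.IH]]
            chern_combination_chern)
        (use Suc in auto)
  qed
qed

lemma power_sum_add_const:
  fixes \<rho> :: "'b \<Rightarrow> 'a::comm_semiring_1"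
  shows "power_sum (\<lambda>b. \<rho> b + c) B m = (\<Sum>j\<le>m. of_nat (m choose j) * c ^ j * power_sum \<rho> B (m - j))"
proof -
  have "power_sum (\<lambda>b. \<rho> b + c) B m = (\<Sum>b\<in>B. \<Sum>j\<le>m. of_nat (m choose j) * c ^ j * \<rho> b ^ (m - j))"
    unfolding power_sum_def by (simp add: binomial_ring add.commute[of "\<rho> _"])
  also have "\<dots> = (\<Sum>j\<le>m. of_nat (m choose j) * c ^ j * power_sum \<rho> B (m - j))"
    unfolding power_sum_def sum_distrib_left by (rule sum.swap)
  finally show ?thesis .
qed

lemma sum_power_sum_shift:
  fixes \<rho> :: "'b \<Rightarrow> 'a::comm_semiring_1"
  shows "(\<Sum>i<r. power_sum (\<lambda>b. \<rho> b + c * x i) B m)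
       = (\<Sum>j\<le>m. of_nat (m choose j) * c ^ j * (power_sum x {..<r} j * power_sum \<rho> B (m - j)))"
proof -
  have "(\<Sum>i<r. power_sum (\<lambda>b. \<rho> b + c * x i) B m)
      = (\<Sum>j\<le>m. \<Sum>i<r. of_nat (m choose j) * c ^ j * (x i ^ j * power_sum \<rho> B (m - j)))"
    unfolding power_sum_add_const by (subst sum.swap) (simp add: power_mult_distrib mult_ac)
  then show ?thesis by (simp add: power_sum_def[of x] sum_distrib_left sum_distrib_right mult_ac)
qed

lemma sum_fun_upd:
  fixes f :: "'b \<Rightarrow> 'a::comm_monoid_add"
  assumes "finite A" "i \<in> A"
  shows "sum (f(i := v)) A + f i = sum f A + v"
proof -
  have "sum (f(i := v)) (A - {i}) = sum f (A - {i})" by (intro sum.cong) auto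
  then show ?thesis by (simp only: sum.remove[OF assms] fun_upd_same add_ac)
qed

lemma sym_root_fun_upd:
  assumes "i < r"
  shows "sym_root r x (a(i := v)) + real (a i) * x i = sym_root r x a + real v * x i"
proof -
  have "(\<lambda>j. real ((a(i := v)) j) * x j) = (\<lambda>j. real (a j) * x j)(i := real v * x i)" by auto
  then show ?thesis
    unfolding sym_root_def
    using sum_fun_upd[of "{..<r}" i "\<lambda>j. real (a j) * x j" "real v * x i"] assms by (simp only:) simp
qed

lemma sym_root_shift:
  "i < r \<Longrightarrow> sym_root r x (b(i := b i + n)) = sym_root r x b + real n * x i"
  using sym_root_fun_upd[of i r x b "b i + n"] by (simp add: algebra_simps)

lemma sum_sym_exps_shift:
  assumes "i < r" "n \<le> d"
  shows "(\<Sum>a\<in>{a\<in>sym_exps r d. n \<le> a i}. g a) = (\<Sum>b\<in>sym_exps r (d - n). g (b(i := b i + n)))"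
proof (rule sum.reindex_bij_witness[where i = "\<lambda>b. b(i := b i + n)" and j = "\<lambda>a. a(i := a i - n)"])
  fix a assume a: "a \<in> {a\<in>sym_exps r d. n \<le> a i}"
  then show "(a(i := a i - n))(i := (a(i := a i - n)) i + n) = a" by auto
  have "(\<Sum>j<r. (a(i := a i - n)) j) + a i = d + (a i - n)"
    using a assms sum_fun_upd[of "{..<r}" i a] by (simp add: sym_exps_def)
  then show "a(i := a i - n) \<in> sym_exps r (d - n)"
    using a assms by (auto simp: sym_exps_def)
  show "g ((a(i := a i - n))(i := (a(i := a i - n)) i + n)) = g a" using a by simp
next
  fix b assume b: "b \<in> sym_exps r (d - n)"
  then show "(b(i := b i + n))(i := (b(i := b i + n)) i - n) = b" by auto
  have "(\<Sum>j<r. (b(i := b i + n)) j) + b i = (d - n) + (b i + n)"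
    using b assms sum_fun_upd[of "{..<r}" i b] by (simp add: sym_exps_def)
  then show "b(i := b i + n) \<in> {a\<in>sym_exps r d. n \<le> a i}"
    using b assms by (auto simp: sym_exps_def)
qed

text \<open>Writing \<open>d = a\<^sub>0 + \<dots> + a\<^sub>r\<^sub>-\<^sub>1\<close> and \<open>a\<^sub>i = #{n. 1 \<le> n \<le> a\<^sub>i}\<close>, each pair \<open>(i, n)\<close> with
  \<open>n \<le> a\<^sub>i\<close> is traded for the exponent vector \<open>a - n e\<^sub>i\<close> of degree \<open>d - n\<close>.\<close>
lemma sym_power_sum_euler:
  "real d * power_sum (sym_root r x) (sym_exps r d) m
     = (\<Sum>n=1..d. \<Sum>i<r. power_sum (\<lambda>b. sym_root r x b + real n * x i) (sym_exps r (d - n)) m)"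
proof -
  let ?S = "sym_exps r d"
  have "real d * power_sum (sym_root r x) ?S m = (\<Sum>a\<in>?S. \<Sum>i<r. real (a i) * sym_root r x a ^ m)"
    unfolding power_sum_def sum_distrib_left
  proof (intro sum.cong refl)
    fix a assume "a \<in> ?S"
    then have "real d = (\<Sum>i<r. real (a i))" by (simp add: sym_exps_def flip: of_nat_sum)
    then show "real d * sym_root r x a ^ m = (\<Sum>i<r. real (a i) * sym_root r x a ^ m)"
      by (simp add: sum_distrib_right)
  qed
  also have "\<dots> = (\<Sum>a\<in>?S. \<Sum>i<r. \<Sum>n\<in>{n\<in>{1..d}. n \<le> a i}. sym_root r x a ^ m)"
  proof (intro sum.cong refl)
    fix a i assume "a \<in> ?S"
    then have "{n\<in>{1..d}. n \<le> a i} = {1..a i}" using sym_exps_le[of a r d i] by auto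
    then show "real (a i) * sym_root r x a ^ m = (\<Sum>n\<in>{n\<in>{1..d}. n \<le> a i}. sym_root r x a ^ m)"
      by simp
  qed
  also have "\<dots> = (\<Sum>i<r. \<Sum>a\<in>?S. \<Sum>n\<in>{n\<in>{1..d}. n \<le> a i}. sym_root r x a ^ m)"
    by (rule sum.swap)
  also have "\<dots> = (\<Sum>i<r. \<Sum>n\<in>{1..d}. \<Sum>a\<in>{a\<in>?S. n \<le> a i}. sym_root r x a ^ m)"
    by (intro sum.cong refl sum.swap_restrict finite_sym_exps) simp
  also have "\<dots> = (\<Sum>i<r. \<Sum>n\<in>{1..d}. \<Sum>b\<in>sym_exps r (d - n). (sym_root r x b + real n * x i) ^ m)"
  proof (rule sum.cong[OF refl], rule sum.cong[OF refl])
    fix i n assume "i \<in> {..<r}" "n \<in> {1..d}"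
    then show "(\<Sum>a\<in>{a\<in>?S. n \<le> a i}. sym_root r x a ^ m)
        = (\<Sum>b\<in>sym_exps r (d - n). (sym_root r x b + real n * x i) ^ m)"
      using sum_sym_exps_shift[of i r n d "\<lambda>a. sym_root r x a ^ m"] by (simp add: sym_root_shift)
  qed
  also have "\<dots> = (\<Sum>n=1..d. \<Sum>i<r. power_sum (\<lambda>b. sym_root r x b + real n * x i) (sym_exps r (d - n)) m)"
    unfolding power_sum_def by (rule sum.swap)
  finally show ?thesis .
qed

lemma chern_combination_sym_power_sum:
  "chern_combination r m (\<lambda>x. power_sum (sym_root r x) (sym_exps r d) m)"
proof (induction d arbitrary: m rule: less_induct)
  case (less d)
  show ?case
  proof (cases "d = 0")
    case True
    then show ?thesis
      by (cases m) (simp_all add: power_sum_def sym_exps_degree_0 sym_root_def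
                      chern_combination_const chern_combination_zero)
  next
    case False
    let ?P = "\<lambda>x m d. power_sum (sym_root r x) (sym_exps r d) m"
    have recursion: "?P x m d = 1 / real d * (\<Sum>n=1..d. \<Sum>j\<le>m.
            of_nat (m choose j) * real n ^ j * (power_sum x {..<r} j * ?P x (m - j) (d - n)))" for x
    proof -
      have "real d * ?P x m d = (\<Sum>n=1..d. \<Sum>j\<le>m.
              of_nat (m choose j) * real n ^ j * (power_sum x {..<r} j * ?P x (m - j) (d - n)))"
        by (simp only: sym_power_sum_euler sum_power_sum_shift)
      then show ?thesis using False by (simp add: field_simps)
    qed
    show ?thesis
      unfolding recursion
      by (intro chern_combination_scale chern_combination_sum
            chern_combination_mult[OF chern_combination_power_sum less.IH]) (use False in auto)
  qed
qed

lemma segre_sym_0: "segre_sym r x d 0 = 1"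
  by (simp add: segre_sym_eq)

lemma segre_sym_Suc:
  "segre_sym r x d (Suc k) = - 1 / real (Suc k) *
     (\<Sum>i=0..k. segre_sym r x d i * ((-1) ^ (k - i) * power_sum (sym_root r x) (sym_exps r d) (Suc (k - i))))"
  using newton_identity_inverse[OF finite_sym_exps, where \<rho> = "sym_root r x" and k = k]
  by (simp add: segre_sym_eq field_simps del: of_nat_Suc)

lemma chern_combination_segre: "chern_combination r k (\<lambda>x. segre_sym r x d k)"
proof (induction k rule: less_induct)
  case (less k)
  show ?case
  proof (cases k)
    case 0
    then show ?thesis by (simp add: segre_sym_0 chern_combination_const)
  next
    case (Suc k')
    show ?thesis
      unfolding Suc segre_sym_Suc
      by (intro chern_combination_scale chern_combination_sum
            chern_combination_mult[OF less.IH chern_combination_scale[OF chern_combination_sym_power_sum]])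
        (use Suc in auto)
  qed
qed

section \<open>Polynomial dependence on the degree\<close>

definition poly_seq :: "nat \<Rightarrow> (nat \<Rightarrow> real) \<Rightarrow> bool" where
  "poly_seq D f \<longleftrightarrow> (\<exists>q::real poly. degree q \<le> D \<and> (\<forall>n. f n = poly q (real n)))"

lemma poly_seq_mono: "poly_seq D f \<Longrightarrow> D \<le> D' \<Longrightarrow> poly_seq D' f"
  unfolding poly_seq_def using le_trans by blast

lemma poly_seq_const: "poly_seq D (\<lambda>_. c)"
  unfolding poly_seq_def by (intro exI[of _ "[:c:]"]) simp

lemma poly_seq_add:
  assumes "poly_seq D f" "poly_seq D g"
  shows "poly_seq D (\<lambda>n. f n + g n)"
proof -
  obtain p q :: "real poly" where "degree p \<le> D" "\<And>n. f n = poly p (real n)"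
    and "degree q \<le> D" "\<And>n. g n = poly q (real n)"
    using assms unfolding poly_seq_def by blast
  then show ?thesis
    unfolding poly_seq_def by (intro exI[of _ "p + q"]) (simp add: degree_add_le)
qed

lemma poly_seq_mult:
  assumes "poly_seq D1 f" "poly_seq D2 g" "D1 + D2 \<le> D"
  shows "poly_seq D (\<lambda>n. f n * g n)"
proof -
  obtain p q :: "real poly" where "degree p \<le> D1" "\<And>n. f n = poly p (real n)"
    and "degree q \<le> D2" "\<And>n. g n = poly q (real n)"
    using assms unfolding poly_seq_def by blast
  with assms(3) show ?thesis
    unfolding poly_seq_def by (intro exI[of _ "p * q"]) (auto intro: le_trans[OF degree_mult_le])
qed

lemma poly_seq_scale: "poly_seq D f \<Longrightarrow> poly_seq D (\<lambda>n. c * f n)"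
  using poly_seq_mult[OF poly_seq_const[of 0 c], of D f D] by simp

lemma poly_seq_sum:
  "finite I \<Longrightarrow> (\<And>i. i \<in> I \<Longrightarrow> poly_seq D (f i)) \<Longrightarrow> poly_seq D (\<lambda>n. \<Sum>i\<in>I. f i n)"
  by (induction I rule: finite_induct) (simp_all add: poly_seq_const poly_seq_add)

lemma poly_seq_power: "poly_seq l (\<lambda>n. real n ^ l)"
  unfolding poly_seq_def by (intro exI[of _ "monom 1 l"]) (simp add: poly_monom degree_monom_le)

lemma poly_seq_map_of_rat: "poly_seq (degree p) (\<lambda>n. poly (map_poly of_rat p) (real n))"
  unfolding poly_seq_def by (intro exI[of _ "map_poly of_rat p"]) (simp add: degree_map_poly)

lemma poly_eq_sum_coeff:
  fixes q :: "'a::comm_semiring_1 poly"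
  assumes "degree q \<le> D"
  shows "poly q x = (\<Sum>l\<le>D. coeff q l * x ^ l)"
  unfolding poly_altdef using assms
  by (intro sum.mono_neutral_left) (auto simp: coeff_eq_0)

lemma sum_powers_recurrence:
  "real (Suc l) * (\<Sum>j<n. real j ^ l)
     = real n ^ Suc l - (\<Sum>t<l. real (Suc l choose t) * (\<Sum>j<n. real j ^ t))"
proof -
  have "real n ^ Suc l = (\<Sum>j<n. (real j + 1) ^ Suc l - real j ^ Suc l)"
    using sum_lessThan_telescope[of "\<lambda>j. real j ^ Suc l" n] by (simp add: add.commute)
  also have "\<dots> = (\<Sum>j<n. \<Sum>t\<le>l. real (Suc l choose t) * real j ^ t)"
  proof (intro sum.cong refl)
    fix j
    have "(real j + 1) ^ Suc l = (\<Sum>t\<le>Suc l. real (Suc l choose t) * real j ^ t)"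
      using binomial_ring[of "real j" 1 "Suc l"] by simp
    then show "(real j + 1) ^ Suc l - real j ^ Suc l = (\<Sum>t\<le>l. real (Suc l choose t) * real j ^ t)"
      by (simp del: power_Suc)
  qed
  also have "\<dots> = (\<Sum>t\<le>l. real (Suc l choose t) * (\<Sum>j<n. real j ^ t))"
    by (subst sum.swap) (simp add: sum_distrib_left)
  also have "\<dots> = real (Suc l) * (\<Sum>j<n. real j ^ l) + (\<Sum>t<l. real (Suc l choose t) * (\<Sum>j<n. real j ^ t))"
    by (simp add: lessThan_Suc_atMost[symmetric])
  finally show ?thesis by simp
qed

lemma poly_seq_sum_powers: "poly_seq (Suc l) (\<lambda>n. \<Sum>j<n. real j ^ l)"
proof (induction l rule: less_induct)
  case (less l)
  have "(\<Sum>j<n. real j ^ l) = 1 / real (Suc l) *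
          (real n ^ Suc l + (-1) * (\<Sum>t<l. real (Suc l choose t) * (\<Sum>j<n. real j ^ t)))" for n
    using sum_powers_recurrence[of l n] by (simp add: field_simps del: of_nat_Suc)
  moreover have "poly_seq (Suc l) (\<lambda>n. 1 / real (Suc l) *
          (real n ^ Suc l + (-1) * (\<Sum>t<l. real (Suc l choose t) * (\<Sum>j<n. real j ^ t))))"
    by (intro poly_seq_scale poly_seq_add poly_seq_power poly_seq_sum poly_seq_mono[OF less.IH]) auto
  ultimately show ?case by simp
qed

lemma poly_seq_partial_sums: "poly_seq D f \<Longrightarrow> poly_seq (Suc D) (\<lambda>n. \<Sum>j\<le>n. f j)"
proof -
  assume "poly_seq D f"
  then obtain q where q: "degree q \<le> D" "\<And>n. f n = poly q (real n)"
    unfolding poly_seq_def by blast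
  have "(\<Sum>j\<le>n. f j) = (\<Sum>l\<le>D. coeff q l * ((\<Sum>j<n. real j ^ l) + real n ^ l))" for n
    unfolding q(2) poly_eq_sum_coeff[OF q(1)] sum_distrib_left distrib_left
    by (subst sum.swap) (simp add: lessThan_Suc_atMost[symmetric] sum.distrib)
  moreover have "poly_seq (Suc D) (\<lambda>n. \<Sum>l\<le>D. coeff q l * ((\<Sum>j<n. real j ^ l) + real n ^ l))"
    by (intro poly_seq_sum poly_seq_scale poly_seq_add poly_seq_mono[OF poly_seq_sum_powers]
          poly_seq_mono[OF poly_seq_power]) auto
  ultimately show ?thesis by simp
qed

lemma poly_seq_convolution:
  assumes f: "poly_seq D1 f" and g: "poly_seq D2 g"
  shows "poly_seq (D1 + D2 + 1) (\<lambda>n. \<Sum>j\<le>n. f j * g (n - j))"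
proof -
  obtain q where q: "degree q \<le> D2" "\<And>n. g n = poly q (real n)"
    using g unfolding poly_seq_def by blast
  \<comment> \<open>Expand \<open>g (n - j)\<close> binomially in \<open>n\<close> and \<open>- j\<close>.\<close>
  let ?h = "\<lambda>l t n. real n ^ t * (\<Sum>j\<le>n. f j * (- real j) ^ (l - t))"
  have "(\<Sum>j\<le>n. f j * g (n - j)) = (\<Sum>l\<le>D2. \<Sum>t\<le>l. coeff q l * real (l choose t) * ?h l t n)" for n
  proof -
    have "g (n - j) = (\<Sum>l\<le>D2. \<Sum>t\<le>l. coeff q l * real (l choose t) * real n ^ t * (- real j) ^ (l - t))"
      if "j \<le> n" for j
    proof -
      have "g (n - j) = (\<Sum>l\<le>D2. coeff q l * (real n + - real j) ^ l)"
        using that by (simp add: q(2) poly_eq_sum_coeff[OF q(1)] of_nat_diff)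
      then show ?thesis by (simp only: binomial_ring sum_distrib_left mult_ac)
    qed
    then have "(\<Sum>j\<le>n. f j * g (n - j))
        = (\<Sum>j\<le>n. \<Sum>l\<le>D2. \<Sum>t\<le>l. coeff q l * real (l choose t) * real n ^ t * (f j * (- real j) ^ (l - t)))"
      by (intro sum.cong[OF refl]) (simp add: sum_distrib_left mult_ac)
    also have "\<dots> = (\<Sum>l\<le>D2. \<Sum>j\<le>n. \<Sum>t\<le>l. coeff q l * real (l choose t) * real n ^ t * (f j * (- real j) ^ (l - t)))"
      by (rule sum.swap)
    also have "\<dots> = (\<Sum>l\<le>D2. \<Sum>t\<le>l. \<Sum>j\<le>n. coeff q l * real (l choose t) * real n ^ t * (f j * (- real j) ^ (l - t)))"
      by (rule sum.cong[OF refl], rule sum.swap)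
    also have "\<dots> = (\<Sum>l\<le>D2. \<Sum>t\<le>l. coeff q l * real (l choose t) * ?h l t n)"
      by (simp only: sum_distrib_left mult.assoc)
    finally show ?thesis .
  qed
  moreover have "poly_seq (D1 + D2 + 1) (\<lambda>n. \<Sum>l\<le>D2. \<Sum>t\<le>l. coeff q l * real (l choose t) * ?h l t n)"
  proof (intro poly_seq_sum poly_seq_scale)
    fix l t assume "l \<in> {..D2}" "t \<in> {..l}"
    have "poly_seq (D1 + (l - t)) (\<lambda>j. f j * (- real j) ^ (l - t))"
      unfolding power_minus[of "real _"] by (rule poly_seq_mult[OF f poly_seq_scale[OF poly_seq_power]]) simp
    then show "poly_seq (D1 + D2 + 1) (?h l t)"
      by (rule poly_seq_mult[OF poly_seq_power poly_seq_partial_sums]) (use \<open>l \<in> _\<close> \<open>t \<in> _\<close> in auto)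
  qed auto
  ultimately show ?thesis by simp
qed

lemma sum_sym_exps_rank_Suc:
  "(\<Sum>a\<in>sym_exps (Suc r) d. g a) = (\<Sum>j\<le>d. \<Sum>b\<in>sym_exps r (d - j). g (b(r := j)))"
proof -
  have "(\<lambda>a. a r) ` sym_exps (Suc r) d \<subseteq> {..d}" using sym_exps_le by auto
  then have "(\<Sum>a\<in>sym_exps (Suc r) d. g a) = (\<Sum>j\<le>d. \<Sum>a\<in>{a\<in>sym_exps (Suc r) d. a r = j}. g a)"
    by (intro sum.group[symmetric] finite_sym_exps) auto
  also have "\<dots> = (\<Sum>j\<le>d. \<Sum>b\<in>sym_exps r (d - j). g (b(r := j)))"
  proof (rule sum.cong[OF refl])
    fix j assume "j \<in> {..d}"
    then show "(\<Sum>a\<in>{a\<in>sym_exps (Suc r) d. a r = j}. g a) = (\<Sum>b\<in>sym_exps r (d - j). g (b(r := j)))"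
      by (intro sum.reindex_bij_witness[where i = "\<lambda>b. b(r := j)" and j = "\<lambda>a. a(r := 0)"])
        (auto simp: sym_exps_def fun_eq_iff)
  qed
  finally show ?thesis .
qed

lemma sym_root_Suc_fun_upd: "sym_root (Suc r) x (b(r := j)) = sym_root r x b + real j * x r"
proof -
  have "(\<Sum>k<r. real ((b(r := j)) k) * x k) = (\<Sum>k<r. real (b k) * x k)"
    by (intro sum.cong) auto
  then show ?thesis unfolding sym_root_def by simp
qed

lemma poly_seq_sym_power_sum:
  assumes "1 \<le> r"
  shows "poly_seq (m + r - 1) (\<lambda>d. power_sum (sym_root r x) (sym_exps r d) m)"
  using assms
proof (induction r arbitrary: m rule: nat_induct_at_least)
  case base
  have "power_sum (sym_root (Suc 0) x) (sym_exps (Suc 0) d) m = x 0 ^ m * real d ^ m" for d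
  proof -
    have "power_sum (sym_root (Suc 0) x) (sym_exps (Suc 0) d) m
        = (\<Sum>j\<le>d. if j = d then (real j * x 0) ^ m else 0)"
      unfolding power_sum_def sum_sym_exps_rank_Suc sym_root_Suc_fun_upd
      by (intro sum.cong refl) (auto simp: sym_exps_rank_0 sym_root_def)
    then show ?thesis by (simp add: power_mult_distrib)
  qed
  then show ?case by (simp add: poly_seq_scale poly_seq_power flip: One_nat_def)
next
  case (Suc r)
  let ?P = "\<lambda>r m d. power_sum (sym_root r x) (sym_exps r d) m"
  have "?P (Suc r) m d = (\<Sum>i\<le>m. (of_nat (m choose i) * x r ^ i) * (\<Sum>j\<le>d. real j ^ i * ?P r (m - i) (d - j)))" for d
  proof -
    have "?P (Suc r) m d = (\<Sum>j\<le>d. power_sum (\<lambda>b. sym_root r x b + real j * x r) (sym_exps r (d - j)) m)"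
      unfolding power_sum_def sum_sym_exps_rank_Suc sym_root_Suc_fun_upd ..
    also have "\<dots> = (\<Sum>j\<le>d. \<Sum>i\<le>m. (of_nat (m choose i) * x r ^ i) * (real j ^ i * ?P r (m - i) (d - j)))"
      unfolding power_sum_add_const by (simp add: power_mult_distrib mult_ac)
    also have "\<dots> = (\<Sum>i\<le>m. (of_nat (m choose i) * x r ^ i) * (\<Sum>j\<le>d. real j ^ i * ?P r (m - i) (d - j)))"
      by (subst sum.swap) (simp add: sum_distrib_left)
    finally show ?thesis .
  qed
  moreover have "poly_seq (m + Suc r - 1)
      (\<lambda>d. \<Sum>i\<le>m. (of_nat (m choose i) * x r ^ i) * (\<Sum>j\<le>d. real j ^ i * ?P r (m - i) (d - j)))"
  proof (intro poly_seq_sum poly_seq_scale)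
    fix i assume "i \<in> {..m}"
    then show "poly_seq (m + Suc r - 1) (\<lambda>d. \<Sum>j\<le>d. real j ^ i * ?P r (m - i) (d - j))"
      using Suc.hyps by (intro poly_seq_mono[OF poly_seq_convolution[OF poly_seq_power Suc.IH]]) auto
  qed simp
  ultimately show ?case by simp
qed

lemma poly_seq_segre:
  assumes "1 \<le> r"
  shows "poly_seq (r * k) (\<lambda>d. segre_sym r x d k)"
proof (induction k rule: less_induct)
  case (less k)
  show ?case
  proof (cases k)
    case 0
    then show ?thesis by (simp add: segre_sym_0 poly_seq_const)
  next
    case (Suc k')
    have "poly_seq (r * k) (\<lambda>d. segre_sym r x d i *
            ((-1) ^ (k' - i) * power_sum (sym_root r x) (sym_exps r d) (Suc (k' - i))))"
      if "i \<le> k'" for i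
    proof (rule poly_seq_mult[OF less.IH poly_seq_scale[OF poly_seq_sym_power_sum[OF assms]]])
      have "k' - i \<le> r * (k' - i)" using assms by simp
      moreover have "r * i + r * (k' - i) = r * k'" using that by (simp flip: distrib_left)
      moreover have "r * k = r * k' + r" using Suc by simp
      ultimately show "r * i + (Suc (k' - i) + r - 1) \<le> r * k"
        using assms by arith
    qed (use that Suc in auto)
    then show ?thesis
      unfolding Suc segre_sym_Suc
      by (intro poly_seq_scale poly_seq_sum) (use Suc in auto)
  qed
qed

section \<open>Interpolation\<close>

lemma poly_map_poly_of_rat_of_nat:
  "poly (map_poly of_rat p) (of_nat n) = (of_rat (poly p (of_nat n)) :: 'a::field_char_0)"
  by (induction p) (auto simp: map_poly_pCons of_rat_add of_rat_mult)

definition lagrange_basis :: "nat \<Rightarrow> nat \<Rightarrow> rat poly" where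
  "lagrange_basis D e = smult (inverse (\<Prod>e'\<in>{..D} - {e}. of_nat e - of_nat e'))
                              (\<Prod>e'\<in>{..D} - {e}. [:- of_nat e', 1:])"

lemma degree_lagrange_basis: "e \<le> D \<Longrightarrow> degree (lagrange_basis D e) \<le> D"
  unfolding lagrange_basis_def
  by (rule order.trans[OF degree_smult_le], rule order.trans[OF degree_prod_sum_le]) auto

lemma poly_lagrange_basis:
  "e \<le> D \<Longrightarrow> e' \<le> D \<Longrightarrow> poly (lagrange_basis D e) (of_nat e') = (if e' = e then 1 else 0)"
  by (auto simp: lagrange_basis_def poly_prod prod_zero_iff)

lemma poly_seq_interpolation:
  assumes "poly_seq D f"
  shows "f d = (\<Sum>e\<le>D. f e * of_rat (poly (lagrange_basis D e) (of_nat d)))"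
proof -
  obtain q where q: "degree q \<le> D" "\<And>n. f n = poly q (real n)"
    using assms unfolding poly_seq_def by blast
  define R where "R = (\<Sum>e\<le>D. smult (f e) (map_poly of_rat (lagrange_basis D e)))"
  have poly_R: "poly R (real n) = (\<Sum>e\<le>D. f e * of_rat (poly (lagrange_basis D e) (of_nat n)))" for n
    by (simp add: R_def poly_sum poly_map_poly_of_rat_of_nat)
  have "degree R \<le> D"
    unfolding R_def
    by (intro degree_sum_le finite_atMost order.trans[OF degree_smult_le])
       (simp add: degree_map_poly degree_lagrange_basis)
  moreover have "poly q y = poly R y" if "y \<in> real ` {..D}" for y
    using that by (auto simp: poly_R poly_lagrange_basis q(2) if_distrib cong: if_cong)
  ultimately have "q = R"
    using q(1) by (intro poly_eqI_degree[where A = "real ` {..D}"]) (auto simp: card_image)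
  then have "f d = poly R (real d)" by (simp add: q(2))
  then show ?thesis by (simp only: poly_R)
qed

text \<open>Interpolate the coefficient of each \<open>c\<^sub>\<lambda>\<close> at \<open>d = 0, \<dots>, D\<close>.\<close>
lemma chern_combination_poly_coeffs:
  assumes comb: "\<And>d. chern_combination r k (\<lambda>x. f x d)" and poly: "\<And>x. poly_seq D (f x)"
  shows "\<exists>p :: nat multiset \<Rightarrow> rat poly. (\<forall>lam. degree (p lam) \<le> D) \<and>
           (\<forall>x d. f x d = (\<Sum>lam\<in>partitions_of k. poly (map_poly of_rat (p lam)) (real d) * chern_part r x lam))"
proof -
  obtain \<alpha> where \<alpha>: "\<And>e x. f x e = (\<Sum>lam\<in>partitions_of k. of_rat (\<alpha> e lam) * chern_part r x lam)"
    using comb unfolding chern_combination_def by metis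
  define p where "p lam = (\<Sum>e\<le>D. smult (\<alpha> e lam) (lagrange_basis D e))" for lam
  have "degree (p lam) \<le> D" for lam
    unfolding p_def
    by (intro degree_sum_le finite_atMost order.trans[OF degree_smult_le]) (simp add: degree_lagrange_basis)
  moreover have "f x d = (\<Sum>lam\<in>partitions_of k. poly (map_poly of_rat (p lam)) (real d) * chern_part r x lam)" for x d
  proof -
    have "f x d = (\<Sum>e\<le>D. f x e * of_rat (poly (lagrange_basis D e) (of_nat d)))"
      by (rule poly_seq_interpolation[OF poly])
    also have "\<dots> = (\<Sum>lam\<in>partitions_of k. \<Sum>e\<le>D.
                      of_rat (\<alpha> e lam * poly (lagrange_basis D e) (of_nat d)) * chern_part r x lam)"
      unfolding \<alpha> sum_distrib_right by (subst sum.swap) (simp add: of_rat_mult mult_ac)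
    also have "\<dots> = (\<Sum>lam\<in>partitions_of k. poly (map_poly of_rat (p lam)) (real d) * chern_part r x lam)"
      by (simp add: p_def poly_sum poly_map_poly_of_rat_of_nat of_rat_sum sum_distrib_right)
    finally show ?thesis .
  qed
  ultimately show ?thesis by blast
qed

section \<open>Growth for trivial Chern roots\<close>

lemma card_sym_exps_rank_Suc: "card (sym_exps (Suc r) d) = (\<Sum>j\<le>d. card (sym_exps r (d - j)))"
  using sum_sym_exps_rank_Suc[of "\<lambda>_. 1 :: nat" r d] by simp

lemma card_sym_exps_rank_1: "card (sym_exps 1 d) = 1"
proof -
  have "card (sym_exps (Suc 0) d) = (\<Sum>j\<le>d. if j = d then 1 else 0)"
    unfolding card_sym_exps_rank_Suc by (intro sum.cong refl) (auto simp: sym_exps_rank_0)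
  then show ?thesis by simp
qed

lemma power_Suc_diff_le: "(real d + 1) ^ r - real d ^ r \<le> real r * (real d + 1) ^ (r - 1)"
proof (cases r)
  case (Suc s)
  have "(real d + 1) ^ Suc s - real d ^ Suc s = (\<Sum>i<Suc s. real d ^ (s - i) * (real d + 1) ^ i)"
    using power_diff_sumr2[of "real d + 1" "Suc s" "real d"] by simp
  also have "\<dots> \<le> (\<Sum>i<Suc s. (real d + 1) ^ (s - i) * (real d + 1) ^ i)"
    by (intro sum_mono mult_right_mono power_mono) auto
  also have "\<dots> = real (Suc s) * (real d + 1) ^ s"
    by (simp flip: power_add)
  finally show ?thesis using Suc by simp
qed simp

lemma sum_powers_lower_bound: "1 \<le> r \<Longrightarrow> real d ^ r \<le> real r * (\<Sum>j\<le>d. real j ^ (r - 1))"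
proof (induction d)
  case 0
  then show ?case by (cases r) auto
next
  case (Suc d)
  then show ?case
    using power_Suc_diff_le[of d r] by (simp add: distrib_left add.commute)
qed

lemma card_sym_exps_lower_bound:
  assumes "1 \<le> r"
  shows "real d ^ (r - 1) / fact (r - 1) \<le> real (card (sym_exps r d))"
  using assms
proof (induction r arbitrary: d rule: nat_induct_at_least)
  case base
  then show ?case using card_sym_exps_rank_1 by simp
next
  case (Suc r)
  have "real d ^ r / fact r \<le> real r * (\<Sum>j\<le>d. real j ^ (r - 1)) / fact r"
    using Suc.hyps by (intro divide_right_mono sum_powers_lower_bound) auto
  also have "\<dots> = (\<Sum>j\<le>d. real j ^ (r - 1) / fact (r - 1))"
    using Suc.hyps by (simp add: sum_divide_distrib fact_reduce[of r])
  also have "\<dots> \<le> (\<Sum>j\<le>d. real (card (sym_exps r j)))"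
    by (intro sum_mono Suc.IH)
  also have "\<dots> = (\<Sum>j\<le>d. real (card (sym_exps r (d - j))))"
    using sum.atLeastAtMost_rev[of "\<lambda>j. real (card (sym_exps r j))" 0 d] by (simp add: atLeast0AtMost)
  finally show ?case by (simp add: card_sym_exps_rank_Suc)
qed

lemma power_sum_sym_root_ones:
  "power_sum (sym_root r (\<lambda>_. 1)) (sym_exps r d) m = real (card (sym_exps r d)) * real d ^ m"
proof -
  have "sym_root r (\<lambda>_. 1) a = real d" if "a \<in> sym_exps r d" for a
    using that by (simp add: sym_root_def sym_exps_def flip: of_nat_sum)
  then show ?thesis by (simp add: power_sum_def)
qed

lemma newton_recursion_lower_bound:
  fixes t :: "nat \<Rightarrow> real"
  assumes t0: "t 0 = 1"
    and t_Suc: "\<And>k. t (Suc k) = 1 / real (Suc k) * (\<Sum>i\<le>k. t i * (c * y ^ Suc (k - i)))"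
    and "0 \<le> c" "0 \<le> y"
  shows "(c * y) ^ k / fact k \<le> t k"
proof (induction k rule: less_induct)
  case (less k)
  show ?case
  proof (cases k)
    case 0
    then show ?thesis using t0 by simp
  next
    case (Suc k')
    have "0 \<le> t i" if "i \<le> k'" for i
    proof -
      have "0 \<le> (c * y) ^ i / fact i" using assms(3,4) by simp
      also have "\<dots> \<le> t i" using less[of i] that Suc by simp
      finally show ?thesis .
    qed
    then have "t k' * (c * y) \<le> (\<Sum>i\<le>k'. t i * (c * y ^ Suc (k' - i)))"
      using member_le_sum[of k' "{..k'}" "\<lambda>i. t i * (c * y ^ Suc (k' - i))"] assms(3,4) by simp
    moreover have "(c * y) ^ k' / fact k' * (c * y) \<le> t k' * (c * y)"
      using less[of k'] Suc assms(3,4) by (intro mult_right_mono) auto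
    ultimately have "(c * y) ^ k' / fact k' * (c * y) \<le> real (Suc k') * t k"
      using Suc t_Suc[of k'] by simp
    then show ?thesis
      using Suc by (simp add: field_simps del: of_nat_Suc)
  qed
qed

lemma minus_one_power_diff:
  assumes "i \<le> k"
  shows "(-1 :: 'a::ring_1) ^ k * (-1) ^ (k - i) = (-1) ^ i"
proof -
  have k: "(-1 :: 'a) ^ k = (-1) ^ i * (-1) ^ (k - i)" using assms by (simp flip: power_add)
  have "(-1 :: 'a) ^ (k - i) * (-1) ^ (k - i) = 1" by (simp flip: power_add)
  then show ?thesis by (simp only: k mult.assoc mult_1_right)
qed

lemma segre_sym_ones_lower_bound:
  assumes "1 \<le> r"
  shows "real d ^ (r * k) / (fact (r - 1) ^ k * fact k) \<le> \<bar>segre_sym r (\<lambda>_. 1) d k\<bar>"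
proof -
  let ?N = "real (card (sym_exps r d))"
  let ?t = "\<lambda>k. (-1) ^ k * segre_sym r (\<lambda>_. 1) d k"
  \<comment> \<open>With all roots equal, the signed Segre classes satisfy a recursion with positive coefficients.\<close>
  have "?t (Suc k) = 1 / real (Suc k) * (\<Sum>i\<le>k. ?t i * (?N * real d ^ Suc (k - i)))" for k
    unfolding segre_sym_Suc power_sum_sym_root_ones atLeast0AtMost sum_distrib_left
  proof (rule sum.cong[OF refl])
    fix i assume "i \<in> {..k}"
    then have "(-1) ^ Suc k * (- 1) * (-1) ^ (k - i) = ((-1) ^ i :: real)"
      using minus_one_power_diff[of i k] by simp
    then show "(-1) ^ Suc k * (- 1 / real (Suc k) * (segre_sym r (\<lambda>_. 1) d i *
          ((-1) ^ (k - i) * (?N * real d ^ Suc (k - i)))))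
        = 1 / real (Suc k) * (?t i * (?N * real d ^ Suc (k - i)))"
      by (simp add: field_simps)
  qed
  then have lower: "(?N * real d) ^ k / fact k \<le> ?t k"
    by (intro newton_recursion_lower_bound) (simp_all add: segre_sym_0)
  have "real d ^ (r * k) = (real d ^ (r - 1) * real d) ^ k"
    using assms by (simp add: power_mult[symmetric] power_Suc2[symmetric] del: power_Suc)
  then have "real d ^ (r * k) / (fact (r - 1) ^ k * fact k)
      = (real d ^ (r - 1) / fact (r - 1) * real d) ^ k / fact k"
    by (simp add: power_divide power_mult_distrib)
  also have "\<dots> \<le> (?N * real d) ^ k / fact k"
    using card_sym_exps_lower_bound[OF assms]
    by (intro divide_right_mono power_mono mult_right_mono) auto
  also have "\<dots> \<le> ?t k" by (fact lower)
  also have "\<dots> \<le> \<bar>segre_sym r (\<lambda>_. 1) d k\<bar>"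
    using abs_ge_self[of "?t k"] by (simp add: abs_mult)
  finally show ?thesis .
qed

lemma poly_seq_bounded:
  assumes "poly_seq D f"
  obtains C where "\<And>n. 1 \<le> n \<Longrightarrow> \<bar>f n\<bar> \<le> C * real n ^ D"
proof -
  obtain q where q: "degree q \<le> D" "\<And>n. f n = poly q (real n)"
    using assms unfolding poly_seq_def by blast
  have "\<bar>f n\<bar> \<le> (\<Sum>l\<le>D. \<bar>coeff q l\<bar>) * real n ^ D" if "1 \<le> n" for n
  proof -
    have "\<bar>f n\<bar> \<le> (\<Sum>l\<le>D. \<bar>coeff q l * real n ^ l\<bar>)"
      unfolding q(2) poly_eq_sum_coeff[OF q(1)] by (rule sum_abs)
    also have "\<dots> \<le> (\<Sum>l\<le>D. \<bar>coeff q l\<bar> * real n ^ D)"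
    proof (rule sum_mono)
      fix l assume "l \<in> {..D}"
      then have "real n ^ l \<le> real n ^ D" using that by (intro power_increasing) auto
      then show "\<bar>coeff q l * real n ^ l\<bar> \<le> \<bar>coeff q l\<bar> * real n ^ D"
        by (simp add: abs_mult mult_left_mono)
    qed
    finally show ?thesis by (simp add: sum_distrib_right)
  qed
  then show ?thesis by (rule that)
qed

lemma segre_sym_ones_not_poly_seq:
  assumes "1 \<le> r" "0 < k"
  shows "\<not> poly_seq (r * k - 1) (\<lambda>d. segre_sym r (\<lambda>_. 1) d k)"
proof
  define D where "D = r * k - 1"
  have rk: "r * k = Suc D" unfolding D_def using assms by (simp add: Suc_le_eq)
  assume "poly_seq (r * k - 1) (\<lambda>d. segre_sym r (\<lambda>_. 1) d k)"
  then obtain C where C: "\<And>d. 1 \<le> d \<Longrightarrow> \<bar>segre_sym r (\<lambda>_. 1) d k\<bar> \<le> C * real d ^ D"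
    unfolding D_def using poly_seq_bounded by blast
  define M :: real where "M = fact (r - 1) ^ k * fact k"
  define d where "d = nat \<lceil>C * M\<rceil> + 1"
  have "0 < M" unfolding M_def by simp
  have "1 \<le> d" unfolding d_def by simp
  have "C * M < real d" unfolding d_def by linarith
  have "real d ^ Suc D / M \<le> \<bar>segre_sym r (\<lambda>_. 1) d k\<bar>"
    unfolding M_def rk[symmetric] by (rule segre_sym_ones_lower_bound[OF assms(1)])
  also have "\<dots> \<le> C * real d ^ D" using C \<open>1 \<le> d\<close> by blast
  finally have "real d * real d ^ D \<le> (C * M) * real d ^ D"
    using \<open>0 < M\<close> by (simp add: field_simps)
  then have "real d \<le> C * M"
    using \<open>1 \<le> d\<close> by simp
  with \<open>C * M < real d\<close> show False by simp
qed

lemma segre_coeffs_top_degree: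
  assumes "1 \<le> r"
    and deg: "\<forall>lam. degree (p lam) \<le> r * k"
    and segre: "\<forall>x d. segre_sym r x d k
                  = (\<Sum>lam\<in>partitions_of k. poly (map_poly of_rat (p lam)) (real d) * chern_part r x lam)"
  shows "\<exists>lam\<in>partitions_of k. (\<forall>i\<in>#lam. i \<le> r) \<and> degree (p lam) = r * k"
proof (rule ccontr)
  assume low: "\<not> ?thesis"
  have "0 < k"
  proof (rule ccontr)
    assume "\<not> 0 < k"
    with low deg show False by (simp add: partitions_of_0)
  qed
  \<comment> \<open>At \<open>x = 1\<close> the \<open>c\<^sub>\<lambda>\<close> with a part \<open>> r\<close> vanish.\<close>
  have "poly_seq (r * k - 1) (\<lambda>d. poly (map_poly of_rat (p lam)) (real d) * chern_part r (\<lambda>_. 1) lam)"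
    if "lam \<in> partitions_of k" for lam
  proof (cases "\<forall>i\<in>#lam. i \<le> r")
    case True
    with low that have "degree (p lam) \<noteq> r * k" by blast
    with deg have "degree (p lam) \<le> r * k - 1"
      using le_neq_implies_less[of "degree (p lam)" "r * k"] by auto
    then show ?thesis by (intro poly_seq_mult[OF poly_seq_map_of_rat poly_seq_const[of 0]]) simp
  next
    case False
    then obtain i where "i \<in># lam" "r < i" by (auto simp: not_le)
    then show ?thesis by (simp add: chern_part_eq_0_above_rank poly_seq_const)
  qed
  then have "poly_seq (r * k - 1) (\<lambda>d. segre_sym r (\<lambda>_. 1) d k)"
    unfolding segre[rule_format] by (intro poly_seq_sum finite_partitions_of)
  with segre_sym_ones_not_poly_seq[OF assms(1) \<open>0 < k\<close>] show False ..
qed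

theorem lemma3p2:
  fixes r k :: nat
  assumes "1 \<le> r"
  shows "\<exists>p :: nat multiset \<Rightarrow> rat poly.
           (\<forall>lam\<in>partitions_of k. degree (p lam) \<le> r * k)
         \<and> (\<exists>lam\<in>partitions_of k. (\<forall>i\<in>#lam. i \<le> r) \<and> degree (p lam) = r * k)
         \<and> (\<forall>(x :: nat \<Rightarrow> real) (d :: nat).
              segre_sym r x d k =
              (\<Sum>lam\<in>partitions_of k. poly (map_poly of_rat (p lam)) (real d) * chern_part r x lam))"
proof -
  obtain p :: "nat multiset \<Rightarrow> rat poly" where deg: "\<forall>lam. degree (p lam) \<le> r * k"
    and segre: "\<forall>x d. segre_sym r x d k
                  = (\<Sum>lam\<in>partitions_of k. poly (map_poly of_rat (p lam)) (real d) * chern_part r x lam)"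
    using chern_combination_poly_coeffs[OF chern_combination_segre poly_seq_segre[OF assms]] by blast
  with segre_coeffs_top_degree[OF assms deg segre] show ?thesis by blast
qed

end
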